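(* Let $F:\mathbb{R}^n\rightrightarrows\mathbb{R}^n$ be a set-valued map, consider the differential inclusion $\dot x\in F(x)$, $x\in\mathbb{R}^n$, and let $X_o,X_u\subset\mathbb{R}^n$. If there exists a lower semicontinuous time-varying barrier function candidate $B:\mathbb{R}_{\geq 0}\times\mathbb{R}^n\to\mathbb{R}$ for safety with respect to $(X_o,X_u)$ that satisfies property $(\star\star)$, then the system $\dot x\in F(x)$ is safe with respect to $(X_o,X_u)$.
   Context: A solution of $\dot x\in F(x)$ starting from $x_o$ is a locally absolutely continuous function $\phi:\operatorname{dom}\phi\to\mathbb{R}^n$, where $\operatorname{dom}\phi$ is $[0,T]$ or $[0,T)$ for some $T\in[0,\infty]$, with $\phi(0)=x_o$ and $\dot\phi(t)\in F(\phi(t))$ for almost all $t\in\operatorname{dom}\phi$. The system is safe with respect to $(X_o,X_u)$ if every solution $\phi$ starting from any $x_o\in X_o$ satisfies $\phi(t)\notin X_u$ for all $t\in\operatorname{dom}\phi$. A time-varying barrier function candidate for safety with respect to $(X_o,X_u)$ is a function $B:\mathbb{R}_{\geq0}\times\mathbb{R}^n\to\mathbb{R}$ with $B(t,x)>0$ for all $(t,x)\in\mathbb{R}_{\geq0}\times X_u$ and $B(t,x)\le 0$ for all $(t,x)\in\mathbb{R}_{\geq0}\times X_o$. Let $K:=\{(t,x)\in\mathbb{R}_{\geq0}\times\mathbb{R}^n: B(t,x)\le 0\}$, with interior $\operatorname{int}(K)$ taken in $\mathbb{R}_{\geq0}\times\mathbb{R}^n$. Property $(\star\star)$: there is an open neighborhood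 $U(K)$ of $K$ such that, along each solution of $\dot x\in F(x)$ considered in the extended time–state space (i.e., along each solution of $(\dot t,\dot x)\in\{1\}\times F(x)$) starting from a point of $U(K)\setminus\operatorname{int}(K)$ and remaining in $U(K)\setminus\operatorname{int}(K)$ on a time interval, the map $t\mapsto B(t,\phi(t))$ is nonincreasing on that interval. *)

theory Defs
  imports "HOL-Analysis.Analysis"
begin

definition abs_cont_on :: "real \<Rightarrow> real \<Rightarrow> (real \<Rightarrow> 'a::real_normed_vector) \<Rightarrow> bool" where
  "abs_cont_on a b \<phi> \<longleftrightarrow>
     (\<forall>\<epsilon>>0. \<exists>\<delta>>0. \<forall>(n::nat) (l::nat \<Rightarrow> real) (r::nat \<Rightarrow> real).
        (\<forall>i<n. l i \<le> r i \<and> a \<le> l i \<and> r i \<le> b) \<and>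
        (\<forall>i<n. \<forall>j<n. i \<noteq> j \<longrightarrow> r i \<le> l j \<or> r j \<le> l i) \<and>
        (\<Sum>i<n. r i - l i) < \<delta>
        \<longrightarrow> (\<Sum>i<n. norm (\<phi> (r i) - \<phi> (l i))) < \<epsilon>)"

definition loc_abs_cont_on :: "real set \<Rightarrow> (real \<Rightarrow> 'a::real_normed_vector) \<Rightarrow> bool" where
  "loc_abs_cont_on D \<phi> \<longleftrightarrow> (\<forall>a b. a \<le> b \<and> {a..b} \<subseteq> D \<longrightarrow> abs_cont_on a b \<phi>)"

definition sol_domain :: "real set \<Rightarrow> bool" where
  "sol_domain D \<longleftrightarrow> (\<exists>T\<ge>0. D = {0..T}) \<or> (\<exists>T>0. D = {0..<T}) \<or> D = {0..}"

definition is_solution :: "('a::euclidean_space \<Rightarrow> 'a set) \<Rightarrow> 'a \<Rightarrow> (real \<Rightarrow> 'a) \<Rightarrow> real set \<Rightarrow> bool" where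
  "is_solution F x0 \<phi> D \<longleftrightarrow>
     sol_domain D \<and> \<phi> 0 = x0 \<and> loc_abs_cont_on D \<phi> \<and>
     (\<exists>N. N \<in> null_sets lebesgue \<and>
        (\<forall>t\<in>D - N. \<exists>v \<in> F (\<phi> t). (\<phi> has_vector_derivative v) (at t within D)))"

definition safe :: "('a::euclidean_space \<Rightarrow> 'a set) \<Rightarrow> 'a set \<Rightarrow> 'a set \<Rightarrow> bool" where
  "safe F Xo Xu \<longleftrightarrow>
     (\<forall>x0\<in>Xo. \<forall>\<phi> D. is_solution F x0 \<phi> D \<longrightarrow> (\<forall>t\<in>D. \<phi> t \<notin> Xu))"

definition ext_space :: "(real \<times> 'a) set" where
  "ext_space = {0..} \<times> UNIV"

definition barrier_candidate :: "(real \<Rightarrow> 'a \<Rightarrow> real) \<Rightarrow> 'a set \<Rightarrow> 'a set \<Rightarrow> bool" where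
  "barrier_candidate B Xo Xu \<longleftrightarrow>
     (\<forall>t\<ge>0. \<forall>x\<in>Xu. B t x > 0) \<and> (\<forall>t\<ge>0. \<forall>x\<in>Xo. B t x \<le> 0)"

definition lsc_on :: "('b::topological_space) set \<Rightarrow> ('b \<Rightarrow> real) \<Rightarrow> bool" where
  "lsc_on S f \<longleftrightarrow> (\<forall>p\<in>S. \<forall>\<epsilon>>0. \<forall>\<^sub>F q in at p within S. f q > f p - \<epsilon>)"

definition sublevel_K :: "(real \<Rightarrow> 'a \<Rightarrow> real) \<Rightarrow> (real \<times> 'a) set" where
  "sublevel_K B = {(t, x). t \<ge> 0 \<and> B t x \<le> 0}"

text \<open>A solution of the extended system (t',x') in {1} x F(x) from (t0,x0) is s |-> (t0+s, phi s)
  with phi a solution of x' in F(x) from x0.\<close>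
definition star_star :: "('a::euclidean_space \<Rightarrow> 'a set) \<Rightarrow> (real \<Rightarrow> 'a \<Rightarrow> real) \<Rightarrow> bool" where
  "star_star F B \<longleftrightarrow>
     (\<exists>U. openin (top_of_set ext_space) U \<and> sublevel_K B \<subseteq> U \<and>
       (let W = U - (top_of_set ext_space) interior_of (sublevel_K B) in
        \<forall>t0\<ge>0. \<forall>x0 \<phi> D. is_solution F x0 \<phi> D \<and> (t0, x0) \<in> W \<longrightarrow>
          (\<forall>I. is_interval I \<and> I \<subseteq> D \<and> (\<forall>s\<in>I. (t0 + s, \<phi> s) \<in> W) \<longrightarrow>
             (\<forall>s1\<in>I. \<forall>s2\<in>I. s1 \<le> s2 \<longrightarrow> B (t0 + s2) (\<phi> s2) \<le> B (t0 + s1) (\<phi> s1)))))"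

end

theory Submission
  imports Defs
begin

(*
  Suppose a solution starts in K = {B <= 0} (B <= 0 on X_o) and has B > 0 at some time t
  (as it would on X_u).  Along the solution, s |-> B(s, phi s) is lower semicontinuous, so the
  times in [0, t] where it is <= 0 form a closed set with a last element tau < t, after which
  the graph of phi stays outside K.  Thus (tau, phi tau) lies in K but not in its interior, and
  by continuity the graph stays in U(K) - int(K) on some [tau, tau + delta].  There (star-star)
  makes B nonincreasing, so B at tau + delta is <= B(tau, phi tau) <= 0: a contradiction.
*)

lemma abs_cont_onE:
  fixes \<phi> :: "real \<Rightarrow> 'a::real_normed_vector"
  assumes "abs_cont_on a b \<phi>" and "0 < \<epsilon>"
  obtains d where "0 < d" and "\<And>(n::nat) l r. \<lbrakk>\<forall>i<n. l i \<le> r i \<and> a \<le> l i \<and> r i \<le> b;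
      \<forall>i<n. \<forall>j<n. i \<noteq> j \<longrightarrow> r i \<le> l j \<or> r j \<le> l i; (\<Sum>i<n. r i - l i) < d\<rbrakk>
      \<Longrightarrow> (\<Sum>i<n. norm (\<phi> (r i) - \<phi> (l i))) < \<epsilon>"
proof -
  obtain d where "0 < d" and d: "\<forall>(n::nat) l r. (\<forall>i<n. l i \<le> r i \<and> a \<le> l i \<and> r i \<le> b) \<and>
      (\<forall>i<n. \<forall>j<n. i \<noteq> j \<longrightarrow> r i \<le> l j \<or> r j \<le> l i) \<and> (\<Sum>i<n. r i - l i) < d
      \<longrightarrow> (\<Sum>i<n. norm (\<phi> (r i) - \<phi> (l i))) < \<epsilon>"
    using assms(1)[unfolded abs_cont_on_def, rule_format, OF assms(2)] by (elim exE conjE)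
  show thesis
    by (rule that[OF \<open>0 < d\<close>], rule d[rule_format]) (intro conjI)
qed

lemma abs_cont_on_imp_uniformly_continuous_on:
  assumes "abs_cont_on a b \<phi>"
  shows "uniformly_continuous_on {a..b} \<phi>"
  unfolding uniformly_continuous_on_def
proof (intro allI impI)
  fix \<epsilon> :: real assume "0 < \<epsilon>"
  obtain d where "0 < d" and d: "\<And>(n::nat) l r. \<lbrakk>\<forall>i<n. l i \<le> r i \<and> a \<le> l i \<and> r i \<le> b;
      \<forall>i<n. \<forall>j<n. i \<noteq> j \<longrightarrow> r i \<le> l j \<or> r j \<le> l i; (\<Sum>i<n. r i - l i) < d\<rbrakk>
      \<Longrightarrow> (\<Sum>i<n. norm (\<phi> (r i) - \<phi> (l i))) < \<epsilon>"
    using abs_cont_onE[OF assms \<open>0 < \<epsilon>\<close>] by blast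
  show "\<exists>d>0. \<forall>x\<in>{a..b}. \<forall>y\<in>{a..b}. dist y x < d \<longrightarrow> dist (\<phi> y) (\<phi> x) < \<epsilon>"
  proof (intro exI[of _ d] conjI ballI impI \<open>0 < d\<close>)
    fix x y assume "x \<in> {a..b}" "y \<in> {a..b}" "dist y x < d"
    then have "(\<Sum>i<(1::nat). norm (\<phi> (max x y) - \<phi> (min x y))) < \<epsilon>"
      by (intro d[of 1 "\<lambda>_. min x y" "\<lambda>_. max x y"]) (auto simp: dist_real_def)
    then have "dist (\<phi> (max x y)) (\<phi> (min x y)) < \<epsilon>"
      by (simp add: dist_norm)
    then show "dist (\<phi> y) (\<phi> x) < \<epsilon>"
      by (cases "x \<le> y") (simp_all add: max_absorb1 max_absorb2 min_absorb1 min_absorb2 dist_commute)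
  qed
qed

lemma abs_cont_on_shift:
  assumes "abs_cont_on (c + a) (c + b) \<phi>"
  shows "abs_cont_on a b (\<lambda>s. \<phi> (c + s))"
  unfolding abs_cont_on_def
proof (intro allI impI)
  fix \<epsilon> :: real assume "0 < \<epsilon>"
  obtain d where "0 < d" and d: "\<And>(n::nat) l r. \<lbrakk>\<forall>i<n. l i \<le> r i \<and> c + a \<le> l i \<and> r i \<le> c + b;
      \<forall>i<n. \<forall>j<n. i \<noteq> j \<longrightarrow> r i \<le> l j \<or> r j \<le> l i; (\<Sum>i<n. r i - l i) < d\<rbrakk>
      \<Longrightarrow> (\<Sum>i<n. norm (\<phi> (r i) - \<phi> (l i))) < \<epsilon>"
    using abs_cont_onE[OF assms \<open>0 < \<epsilon>\<close>] by blast
  show "\<exists>d>0. \<forall>(n::nat) l r. (\<forall>i<n. l i \<le> r i \<and> a \<le> l i \<and> r i \<le> b) \<and>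
      (\<forall>i<n. \<forall>j<n. i \<noteq> j \<longrightarrow> r i \<le> l j \<or> r j \<le> l i) \<and> (\<Sum>i<n. r i - l i) < d
      \<longrightarrow> (\<Sum>i<n. norm (\<phi> (c + r i) - \<phi> (c + l i))) < \<epsilon>"
    apply (intro exI[of _ d] conjI allI impI \<open>0 < d\<close>)
    subgoal for n l r
      by (rule d[of n "\<lambda>i. c + l i" "\<lambda>i. c + r i"]; simp only: add_le_cancel_left add_diff_cancel_left; elim conjE; assumption)
    done
qed

lemma sol_domain_nonneg: "sol_domain D \<Longrightarrow> t \<in> D \<Longrightarrow> 0 \<le> t"
  unfolding sol_domain_def by auto

lemma sol_domain_atLeastAtMost_subset: "sol_domain D \<Longrightarrow> t \<in> D \<Longrightarrow> {0..t} \<subseteq> D"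
  unfolding sol_domain_def by auto

lemma is_solution_continuous_on:
  assumes "is_solution F x0 \<phi> D" and "t \<in> D"
  shows "continuous_on {0..t} \<phi>"
proof -
  have "sol_domain D" and "loc_abs_cont_on D \<phi>"
    using assms(1) unfolding is_solution_def by auto
  with assms(2) have "abs_cont_on 0 t \<phi>"
    using sol_domain_nonneg sol_domain_atLeastAtMost_subset unfolding loc_abs_cont_on_def by blast
  then show ?thesis
    by (intro uniformly_continuous_imp_continuous abs_cont_on_imp_uniformly_continuous_on)
qed

lemma is_solution_shift:
  assumes sol: "is_solution F x0 \<phi> D" and "0 < \<delta>" and seg: "{\<tau>..\<tau> + \<delta>} \<subseteq> D"
  shows "is_solution F (\<phi> \<tau>) (\<lambda>s. \<phi> (\<tau> + s)) {0..\<delta>}"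
proof -
  from sol obtain N where lac: "loc_abs_cont_on D \<phi>" and N: "N \<in> null_sets lebesgue"
    and der: "\<forall>t\<in>D - N. \<exists>v\<in>F (\<phi> t). (\<phi> has_vector_derivative v) (at t within D)"
    unfolding is_solution_def by blast
  have "loc_abs_cont_on {0..\<delta>} (\<lambda>s. \<phi> (\<tau> + s))"
    unfolding loc_abs_cont_on_def
  proof (intro allI impI)
    fix a b assume "a \<le> b \<and> {a..b} \<subseteq> {0..\<delta>}"
    with seg have "\<tau> + a \<le> \<tau> + b \<and> {\<tau> + a..\<tau> + b} \<subseteq> D"
      by auto
    with lac show "abs_cont_on a b (\<lambda>s. \<phi> (\<tau> + s))"
      unfolding loc_abs_cont_on_def by (blast intro: abs_cont_on_shift)
  qed
  moreover have "(+) (-\<tau>) ` N \<in> null_sets lebesgue"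
    using N negligible_translation[of N "-\<tau>"] by (simp only: negligible_iff_null_sets)
  moreover have "\<exists>v\<in>F (\<phi> (\<tau> + t)). ((\<lambda>s. \<phi> (\<tau> + s)) has_vector_derivative v) (at t within {0..\<delta>})"
    if t: "t \<in> {0..\<delta>} - (+) (-\<tau>) ` N" for t
  proof -
    have "\<tau> + t \<in> D - N"
      using t seg by (auto simp: image_iff)
    then obtain v where v: "v \<in> F (\<phi> (\<tau> + t))" and dv: "(\<phi> has_vector_derivative v) (at (\<tau> + t) within D)"
      using der by blast
    have "(+) \<tau> ` {0..\<delta>} \<subseteq> D"
      using seg by auto
    with dv have "(\<phi> has_vector_derivative v) (at (\<tau> + t) within (+) \<tau> ` {0..\<delta>})"
      by (rule has_vector_derivative_within_subset)
    moreover have "((+) \<tau> has_vector_derivative 1) (at t within {0..\<delta>})"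
      by (rule derivative_eq_intros refl | simp)+
    ultimately have "((\<phi> \<circ> (+) \<tau>) has_vector_derivative 1 *\<^sub>R v) (at t within {0..\<delta>})"
      by (intro vector_diff_chain_within) auto
    with v show ?thesis
      by (auto simp: o_def)
  qed
  ultimately show ?thesis
    using \<open>0 < \<delta>\<close> unfolding is_solution_def sol_domain_def by auto
qed

lemma lsc_on_compose:
  assumes f: "lsc_on S f" and g: "continuous_on A g" and gA: "g ` A \<subseteq> S"
  shows "lsc_on A (f \<circ> g)"
  unfolding lsc_on_def
proof (intro ballI allI impI)
  fix p \<epsilon> assume p: "p \<in> A" and \<epsilon>: "(0::real) < \<epsilon>"
  have "\<forall>\<^sub>F y in at (g p) within S. f y > f (g p) - \<epsilon>"
    using f gA p \<epsilon> unfolding lsc_on_def by blast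
  then have near: "\<forall>\<^sub>F y in nhds (g p). y \<in> S \<longrightarrow> f y > f (g p) - \<epsilon>"
    using \<epsilon> by (auto simp: eventually_at_filter elim: eventually_mono)
  have "(g \<longlongrightarrow> g p) (at p within A)"
    using g p by (simp add: continuous_on_def)
  with near have "\<forall>\<^sub>F q in at p within A. g q \<in> S \<longrightarrow> f (g q) > f (g p) - \<epsilon>"
    by (rule eventually_compose_filterlim)
  moreover have "\<forall>\<^sub>F q in at p within A. q \<in> A"
    by (simp add: eventually_at_filter)
  ultimately show "\<forall>\<^sub>F q in at p within A. (f \<circ> g) q > (f \<circ> g) p - \<epsilon>"
    by (rule eventually_elim2) (use gA in auto)
qed

lemma lsc_on_closedin_sublevel:
  fixes h :: "'a::metric_space \<Rightarrow> real"
  assumes "lsc_on A h"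
  shows "closedin (top_of_set A) {x \<in> A. h x \<le> c}"
proof -
  have "openin (top_of_set A) {x \<in> A. c < h x}"
    unfolding openin_euclidean_subtopology_iff
  proof (intro conjI ballI)
    fix p assume p: "p \<in> {x \<in> A. c < h x}"
    moreover have "h p - c > 0"
      using p by simp
    ultimately have "\<forall>\<^sub>F x in at p within A. h x > h p - (h p - c)"
      using assms unfolding lsc_on_def by blast
    then obtain d where "d > 0" and "\<forall>x\<in>A. x \<noteq> p \<and> dist x p < d \<longrightarrow> c < h x"
      unfolding eventually_at by auto
    then show "\<exists>e>0. \<forall>x'\<in>A. dist x' p < e \<longrightarrow> x' \<in> {x \<in> A. c < h x}"
      using p by auto
  qed auto
  moreover have "A - {x \<in> A. h x \<le> c} = {x \<in> A. c < h x}"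
    by auto
  ultimately show ?thesis
    by (simp add: closedin_def)
qed

lemma lsc_on_last_nonpos:
  fixes h :: "real \<Rightarrow> real"
  assumes lsc: "lsc_on {a..b} h" and "a \<le> b" and ha: "h a \<le> 0" and hb: "0 < h b"
  obtains \<tau> where "\<tau> \<in> {a..<b}" "h \<tau> \<le> 0" "\<And>s. s \<in> {\<tau><..b} \<Longrightarrow> 0 < h s"
proof
  define S where "S = {s \<in> {a..b}. h s \<le> 0}"
  have "closed S"
    unfolding S_def using lsc_on_closedin_sublevel[OF lsc] by (rule closedin_closed_trans) simp
  moreover have "a \<in> S" "bdd_above S"
    using \<open>a \<le> b\<close> ha by (auto simp: S_def bdd_above_def)
  ultimately have "Sup S \<in> S"
    by (intro closed_contains_Sup) auto
  then show "h (Sup S) \<le> 0" and "Sup S \<in> {a..<b}"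
    using hb by (auto simp: S_def order.order_iff_strict)
  show "0 < h s" if "s \<in> {Sup S<..b}" for s
    using that cSup_upper[OF _ \<open>bdd_above S\<close>, of s] \<open>Sup S \<in> S\<close> by (force simp: S_def)
qed

lemma continuous_on_right_segment_in_openin:
  fixes \<gamma> :: "real \<Rightarrow> 'a::metric_space"
  assumes U: "openin (top_of_set X) U" and \<gamma>: "continuous_on {a..b} \<gamma>" "\<gamma> ` {a..b} \<subseteq> X"
    and \<tau>: "\<tau> \<in> {a..<b}" "\<gamma> \<tau> \<in> U"
  obtains \<delta> where "0 < \<delta>" "\<tau> + \<delta> \<le> b" "\<gamma> ` {\<tau>..\<tau> + \<delta>} \<subseteq> U"
proof -
  have "openin (top_of_set {a..b}) ({a..b} \<inter> \<gamma> -` U)"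
    using \<gamma> U by (intro continuous_openin_preimage) auto
  then obtain e where "0 < e" and e: "\<forall>s\<in>{a..b}. dist s \<tau> < e \<longrightarrow> \<gamma> s \<in> U"
    using \<tau> unfolding openin_euclidean_subtopology_iff by force
  show thesis
  proof
    show "0 < min (e/2) (b - \<tau>)" and "\<tau> + min (e/2) (b - \<tau>) \<le> b"
      using \<open>0 < e\<close> \<tau> by auto
    show "\<gamma> ` {\<tau>..\<tau> + min (e/2) (b - \<tau>)} \<subseteq> U"
      using e \<tau> \<open>0 < e\<close> by (auto simp: dist_real_def)
  qed
qed

lemma exit_segment_avoids_interior:
  fixes \<gamma> :: "real \<Rightarrow> 'a::metric_space"
  assumes U: "openin (top_of_set X) U" "K \<subseteq> U"
    and \<gamma>: "continuous_on {a..b} \<gamma>" "\<gamma> ` {a..b} \<subseteq> X"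
    and \<tau>: "\<tau> \<in> {a..<b}" "\<gamma> \<tau> \<in> K" and exit: "\<And>s. s \<in> {\<tau><..b} \<Longrightarrow> \<gamma> s \<notin> K"
  obtains \<delta> where "0 < \<delta>" "\<tau> + \<delta> \<le> b" "\<gamma> ` {\<tau>..\<tau> + \<delta>} \<subseteq> U - top_of_set X interior_of K"
proof -
  have interior_sub: "top_of_set X interior_of K \<subseteq> K"
    by (rule interior_of_subset)
  have not_interior: "\<gamma> \<tau> \<notin> top_of_set X interior_of K"
  proof
    assume "\<gamma> \<tau> \<in> top_of_set X interior_of K"
    then obtain \<delta> where "0 < \<delta>" "\<tau> + \<delta> \<le> b" "\<gamma> ` {\<tau>..\<tau> + \<delta>} \<subseteq> top_of_set X interior_of K"
      by (rule continuous_on_right_segment_in_openin[OF openin_interior_of \<gamma> \<tau>(1)])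
    moreover have "\<tau> + \<delta> \<in> {\<tau>..\<tau> + \<delta>}"
      using \<open>0 < \<delta>\<close> by simp
    ultimately have "\<gamma> (\<tau> + \<delta>) \<in> K"
      using interior_sub by blast
    moreover have "\<tau> + \<delta> \<in> {\<tau><..b}"
      using \<open>0 < \<delta>\<close> \<open>\<tau> + \<delta> \<le> b\<close> by simp
    ultimately show False
      using exit by blast
  qed
  obtain \<delta> where "0 < \<delta>" "\<tau> + \<delta> \<le> b" and in_U: "\<gamma> ` {\<tau>..\<tau> + \<delta>} \<subseteq> U"
    using continuous_on_right_segment_in_openin[OF U(1) \<gamma> \<tau>(1)] \<tau>(2) U(2) by blast
  moreover have "\<gamma> s \<notin> top_of_set X interior_of K" if "s \<in> {\<tau>..\<tau> + \<delta>}" for s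
  proof (cases "s = \<tau>")
    case False
    then have "s \<in> {\<tau><..b}"
      using that \<open>\<tau> + \<delta> \<le> b\<close> by auto
    then show ?thesis
      using exit interior_sub by blast
  qed (use not_interior in simp)
  ultimately show thesis
    using that by blast
qed

lemma star_starE:
  assumes "star_star F B"
  obtains U where "openin (top_of_set ext_space) U" and "sublevel_K B \<subseteq> U"
    and "\<And>x0 \<phi> D \<tau> \<delta>. \<lbrakk>is_solution F x0 \<phi> D; 0 < \<delta>; {\<tau>..\<tau> + \<delta>} \<subseteq> D;
      \<And>s. s \<in> {\<tau>..\<tau> + \<delta>} \<Longrightarrow> (s, \<phi> s) \<in> U - top_of_set ext_space interior_of sublevel_K B\<rbrakk>
      \<Longrightarrow> B (\<tau> + \<delta>) (\<phi> (\<tau> + \<delta>)) \<le> B \<tau> (\<phi> \<tau>)"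
proof -
  define W where "W U = U - top_of_set ext_space interior_of sublevel_K B" for U
  obtain U where U: "openin (top_of_set ext_space) U" "sublevel_K B \<subseteq> U"
    and nonincr: "\<forall>t0\<ge>0. \<forall>x0 \<phi> D. is_solution F x0 \<phi> D \<and> (t0, x0) \<in> W U \<longrightarrow>
      (\<forall>I. is_interval I \<and> I \<subseteq> D \<and> (\<forall>s\<in>I. (t0 + s, \<phi> s) \<in> W U) \<longrightarrow>
        (\<forall>s1\<in>I. \<forall>s2\<in>I. s1 \<le> s2 \<longrightarrow> B (t0 + s2) (\<phi> s2) \<le> B (t0 + s1) (\<phi> s1)))"
    using assms unfolding star_star_def Let_def W_def by blast
  show thesis
  proof (rule that[OF U])
    fix x0 \<phi> D \<tau> \<delta>
    assume sol: "is_solution F x0 \<phi> D" and "0 < \<delta>" and seg: "{\<tau>..\<tau> + \<delta>} \<subseteq> D"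
      and in_W: "\<And>s. s \<in> {\<tau>..\<tau> + \<delta>} \<Longrightarrow> (s, \<phi> s) \<in> U - top_of_set ext_space interior_of sublevel_K B"
    have "\<tau> \<in> D"
      using seg \<open>0 < \<delta>\<close> by auto
    then have "0 \<le> \<tau>"
      using sol sol_domain_nonneg unfolding is_solution_def by blast
    have shifted: "is_solution F (\<phi> \<tau>) (\<lambda>s. \<phi> (\<tau> + s)) {0..\<delta>}"
      using sol \<open>0 < \<delta>\<close> seg by (rule is_solution_shift)
    have shifted_in_W: "\<forall>s\<in>{0..\<delta>}. (\<tau> + s, \<phi> (\<tau> + s)) \<in> W U"
      using in_W unfolding W_def by auto
    have "(\<tau>, \<phi> \<tau>) \<in> W U"
      using bspec[OF shifted_in_W, of 0] \<open>0 < \<delta>\<close> by simp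
    have "B (\<tau> + \<delta>) (\<phi> (\<tau> + \<delta>)) \<le> B (\<tau> + 0) (\<phi> (\<tau> + 0))"
      by (rule nonincr[rule_format, of \<tau> "\<phi> \<tau>" "\<lambda>s. \<phi> (\<tau> + s)" "{0..\<delta>}" "{0..\<delta>}" 0 \<delta>])
        (use \<open>0 \<le> \<tau>\<close> \<open>0 < \<delta>\<close> shifted shifted_in_W \<open>(\<tau>, \<phi> \<tau>) \<in> W U\<close> in \<open>auto simp: is_interval_cc\<close>)
    then show "B (\<tau> + \<delta>) (\<phi> (\<tau> + \<delta>)) \<le> B \<tau> (\<phi> \<tau>)"
      by simp
  qed
qed

lemma star_star_sublevel_invariant:
  assumes lsc: "lsc_on ext_space (\<lambda>(t, x). B t x)" and ss: "star_star F B"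
    and sol: "is_solution F x0 \<phi> D" and start: "B 0 x0 \<le> 0" and "t \<in> D"
  shows "B t (\<phi> t) \<le> 0"
proof (rule ccontr)
  assume "\<not> B t (\<phi> t) \<le> 0"
  obtain U where U: "openin (top_of_set ext_space) U" "sublevel_K B \<subseteq> U"
    and nonincr: "\<And>x0 \<phi> D \<tau> \<delta>. \<lbrakk>is_solution F x0 \<phi> D; 0 < \<delta>; {\<tau>..\<tau> + \<delta>} \<subseteq> D;
      \<And>s. s \<in> {\<tau>..\<tau> + \<delta>} \<Longrightarrow> (s, \<phi> s) \<in> U - top_of_set ext_space interior_of sublevel_K B\<rbrakk>
      \<Longrightarrow> B (\<tau> + \<delta>) (\<phi> (\<tau> + \<delta>)) \<le> B \<tau> (\<phi> \<tau>)"
    using star_starE[OF ss] by blast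
  have "sol_domain D" and "\<phi> 0 = x0"
    using sol unfolding is_solution_def by auto
  then have "0 \<le> t" and "{0..t} \<subseteq> D"
    using \<open>t \<in> D\<close> sol_domain_nonneg sol_domain_atLeastAtMost_subset by auto
  define \<gamma> where "\<gamma> s = (s, \<phi> s)" for s
  have \<gamma>: "continuous_on {0..t} \<gamma>" "\<gamma> ` {0..t} \<subseteq> ext_space"
    unfolding \<gamma>_def ext_space_def
    by (auto intro!: continuous_intros is_solution_continuous_on[OF sol \<open>t \<in> D\<close>])
  have "lsc_on {0..t} (\<lambda>s. B s (\<phi> s))"
    using lsc_on_compose[OF lsc \<gamma>] by (simp add: \<gamma>_def o_def)
  then obtain \<tau> where \<tau>: "\<tau> \<in> {0..<t}" "B \<tau> (\<phi> \<tau>) \<le> 0"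
    and exit: "\<And>s. s \<in> {\<tau><..t} \<Longrightarrow> 0 < B s (\<phi> s)"
    by (rule lsc_on_last_nonpos) (use \<open>0 \<le> t\<close> start \<open>\<phi> 0 = x0\<close> \<open>\<not> B t (\<phi> t) \<le> 0\<close> in auto)
  have "\<gamma> \<tau> \<in> sublevel_K B"
    using \<tau> by (simp add: \<gamma>_def sublevel_K_def)
  moreover have "\<gamma> s \<notin> sublevel_K B" if "s \<in> {\<tau><..t}" for s
    using exit[OF that] by (simp add: \<gamma>_def sublevel_K_def)
  ultimately obtain \<delta> where "0 < \<delta>" "\<tau> + \<delta> \<le> t"
    and segment: "\<gamma> ` {\<tau>..\<tau> + \<delta>} \<subseteq> U - top_of_set ext_space interior_of sublevel_K B"
    using exit_segment_avoids_interior[OF U \<gamma> \<tau>(1)] by blast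
  have "B (\<tau> + \<delta>) (\<phi> (\<tau> + \<delta>)) \<le> B \<tau> (\<phi> \<tau>)"
  proof (rule nonincr[OF sol \<open>0 < \<delta>\<close>])
    show "{\<tau>..\<tau> + \<delta>} \<subseteq> D"
      using \<open>{0..t} \<subseteq> D\<close> \<tau>(1) \<open>\<tau> + \<delta> \<le> t\<close> by auto
    show "(s, \<phi> s) \<in> U - top_of_set ext_space interior_of sublevel_K B" if "s \<in> {\<tau>..\<tau> + \<delta>}" for s
      using segment that unfolding \<gamma>_def image_subset_iff by blast
  qed
  moreover have "0 < B (\<tau> + \<delta>) (\<phi> (\<tau> + \<delta>))"
    using exit \<open>0 < \<delta>\<close> \<open>\<tau> + \<delta> \<le> t\<close> by simp
  ultimately show False
    using \<tau>(2) by simp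
qed

theorem theorem1:
  fixes F :: "'a::euclidean_space \<Rightarrow> 'a set"
    and Xo Xu :: "'a set"
  assumes "\<exists>B. lsc_on ext_space (\<lambda>(t, x). B t x) \<and> barrier_candidate B Xo Xu \<and> star_star F B"
  shows "safe F Xo Xu"
  unfolding safe_def
proof (intro ballI allI impI)
  fix x0 \<phi> D t assume "x0 \<in> Xo" and sol: "is_solution F x0 \<phi> D" and "t \<in> D"
  obtain B where lsc: "lsc_on ext_space (\<lambda>(t, x). B t x)" and bc: "barrier_candidate B Xo Xu"
    and ss: "star_star F B"
    using assms by blast
  have "B t (\<phi> t) \<le> 0"
    using star_star_sublevel_invariant[OF lsc ss sol] bc \<open>x0 \<in> Xo\<close> \<open>t \<in> D\<close>
    unfolding barrier_candidate_def by simp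
  moreover have "0 \<le> t"
    using sol \<open>t \<in> D\<close> sol_domain_nonneg unfolding is_solution_def by blast
  ultimately show "\<phi> t \<notin> Xu"
    using bc unfolding barrier_candidate_def by force
qed

end
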